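(* Let $C=(N,E)$ be a (deterministic) TDD respecting a vtree $T$ over $X$. For every node $t$ of $T$ and all distinct $t$-nodes $g,g'$, the functions $f_g$ and $f_{g'}$ have no common model. As a consequence, every model $\tau$ of $f_C$ has a unique certificate in $C$.
   Context: For a finite set $A$, $2^A$ is the set of assignments $A\to\{0,1\}$; a Boolean function over $X$ is a map $2^X\to\{0,1\}$ with models the assignments mapped to $1$. A vtree over $X$ is a rooted tree in which every internal node has exactly two children (ordered: $t_1$, $t_2$) and whose leaves are labeled bijectively by $X$; $X_t$ denotes the variables labeling leaves below node $t$. An nTDD $C=(N,E)$ respecting $T$: nodes $N=\biguplus_t N_t$ ($t$-nodes) over nodes $t$ of $T$; a $t$-node with $t$ a leaf labeled $x$ has a label in $\{x,\neg x,1,0\}$; $E(g)=\emptyset$ for leaf $t$, and $E(g)\subseteq N_{t_1}\times N_{t_2}$ for internal $t$ with children $t_1,t_2$; a distinguished $r$-node $\mathrm{out}$ ($r$ the root). Semantics: a leaf $t$-node computes the function over $\{x\}$ given by its label (literal or constant); for internal $t$, $\tau\in 2^{X_t}$ is a model of $f_g$ iff some $(g_1,g_2)\in E(g)$ has $\tau|_{X_{t_1}}\models f_{g_1}$ and $\tau|_{X_{t_2}}\models f_{g_2}$; $f_C=f_{\mathrm{out}}$. A TDD is an nTDD such that (i) for every leaf $t$ labeled $x$, $N_t$ has at most one node labeled $x$, at most one labeled $\neg x$, at most one labeled $1$, and if some node is labeled $1$ all other nodes of $N_t$ are labeled $0$; (ii) for every internal $t$ and distinct $g,g'\in N_t$,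 $E(g)\cap E(g')=\emptyset$. A certificate for $\tau\in 2^X$ in $C$ is a choice of one $t$-node $g_t$ per node $t$ of $T$ with $g_r=\mathrm{out}$, each leaf choice labeled $1$ or by a literal true under $\tau$, and $(g_{t_1},g_{t_2})\in E(g_t)$ for each internal $t$ with children $t_1,t_2$. *)

theory Defs
  imports Main
begin

text \<open>Since leaves are labelled bijectively, distinct nodes of a vtree are
  distinct subtrees, so we identify a node t of T with the subtree rooted at t.\<close>

datatype 'x vtree = Leaf 'x | Node "'x vtree" "'x vtree"

fun leaves :: "'x vtree \<Rightarrow> 'x list" where
  "leaves (Leaf x) = [x]"
| "leaves (Node t1 t2) = leaves t1 @ leaves t2"

definition vtree_wf :: "'x vtree \<Rightarrow> bool" where
  "vtree_wf T \<longleftrightarrow> distinct (leaves T)"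

definition vars :: "'x vtree \<Rightarrow> 'x set" where
  "vars T = set (leaves T)"

fun nodes :: "'x vtree \<Rightarrow> 'x vtree set" where
  "nodes (Leaf x) = {Leaf x}"
| "nodes (Node t1 t2) = insert (Node t1 t2) (nodes t1 \<union> nodes t2)"

datatype 'x lab = Pos 'x | Neg 'x | One | Zero

fun lab_sem :: "'x lab \<Rightarrow> ('x \<Rightarrow> bool) \<Rightarrow> bool" where
  "lab_sem (Pos x) \<tau> = \<tau> x"
| "lab_sem (Neg x) \<tau> = (\<not> \<tau> x)"
| "lab_sem One \<tau> = True"
| "lab_sem Zero \<tau> = False"

text \<open>A diagram is given by a node set N, a map lev assigning to each node g the
  vtree node t with g \<in> N_t, leaf labels lab, edge sets E, and an output node out.
  N_t is the set of t-nodes.\<close>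

definition tnodes :: "'g set \<Rightarrow> ('g \<Rightarrow> 'x vtree) \<Rightarrow> 'x vtree \<Rightarrow> 'g set" where
  "tnodes N lev t = {g \<in> N. lev g = t}"

definition is_nTDD ::
  "'x vtree \<Rightarrow> 'g set \<Rightarrow> ('g \<Rightarrow> 'x vtree) \<Rightarrow> ('g \<Rightarrow> 'x lab) \<Rightarrow> ('g \<Rightarrow> ('g \<times> 'g) set) \<Rightarrow> 'g \<Rightarrow> bool"
where
  "is_nTDD T N lev lab E out \<longleftrightarrow>
     vtree_wf T \<and>
     (\<forall>g\<in>N. lev g \<in> nodes T) \<and>
     (\<forall>g\<in>N. \<forall>x. lev g = Leaf x \<longrightarrow> lab g \<in> {Pos x, Neg x, One, Zero} \<and> E g = {}) \<and>
     (\<forall>g\<in>N. \<forall>t1 t2. lev g = Node t1 t2 \<longrightarrow> E g \<subseteq> tnodes N lev t1 \<times> tnodes N lev t2) \<and>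
     out \<in> N \<and> lev out = T"

definition is_TDD ::
  "'x vtree \<Rightarrow> 'g set \<Rightarrow> ('g \<Rightarrow> 'x vtree) \<Rightarrow> ('g \<Rightarrow> 'x lab) \<Rightarrow> ('g \<Rightarrow> ('g \<times> 'g) set) \<Rightarrow> 'g \<Rightarrow> bool"
where
  "is_TDD T N lev lab E out \<longleftrightarrow>
     is_nTDD T N lev lab E out \<and>
     (\<forall>x. Leaf x \<in> nodes T \<longrightarrow>
        (\<forall>g\<in>tnodes N lev (Leaf x). \<forall>g'\<in>tnodes N lev (Leaf x).
            lab g = Pos x \<longrightarrow> lab g' = Pos x \<longrightarrow> g = g') \<and>
        (\<forall>g\<in>tnodes N lev (Leaf x). \<forall>g'\<in>tnodes N lev (Leaf x).
            lab g = Neg x \<longrightarrow> lab g' = Neg x \<longrightarrow> g = g') \<and>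
        (\<forall>g\<in>tnodes N lev (Leaf x). \<forall>g'\<in>tnodes N lev (Leaf x).
            lab g = One \<longrightarrow> lab g' = One \<longrightarrow> g = g') \<and>
        (\<forall>g\<in>tnodes N lev (Leaf x). lab g = One \<longrightarrow>
            (\<forall>g'\<in>tnodes N lev (Leaf x). g' \<noteq> g \<longrightarrow> lab g' = Zero))) \<and>
     (\<forall>t1 t2. Node t1 t2 \<in> nodes T \<longrightarrow>
        (\<forall>g\<in>tnodes N lev (Node t1 t2). \<forall>g'\<in>tnodes N lev (Node t1 t2).
            g \<noteq> g' \<longrightarrow> E g \<inter> E g' = {}))"

text \<open>Semantics: sem lab E t g \<tau> says \<tau> (restricted to X_t) is a model of f_g,
  for a t-node g.  Assignments are total maps 'x \<Rightarrow> bool; only values on X_t matter.\<close>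

fun sem :: "('g \<Rightarrow> 'x lab) \<Rightarrow> ('g \<Rightarrow> ('g \<times> 'g) set) \<Rightarrow> 'x vtree \<Rightarrow> 'g \<Rightarrow> ('x \<Rightarrow> bool) \<Rightarrow> bool" where
  "sem lab E (Leaf x) g \<tau> = lab_sem (lab g) \<tau>"
| "sem lab E (Node t1 t2) g \<tau> =
     (\<exists>(g1, g2) \<in> E g. sem lab E t1 g1 \<tau> \<and> sem lab E t2 g2 \<tau>)"

definition is_certificate ::
  "'x vtree \<Rightarrow> 'g set \<Rightarrow> ('g \<Rightarrow> 'x vtree) \<Rightarrow> ('g \<Rightarrow> 'x lab) \<Rightarrow> ('g \<Rightarrow> ('g \<times> 'g) set) \<Rightarrow> 'g
    \<Rightarrow> ('x \<Rightarrow> bool) \<Rightarrow> ('x vtree \<Rightarrow> 'g) \<Rightarrow> bool"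
where
  "is_certificate T N lev lab E out \<tau> c \<longleftrightarrow>
     (\<forall>t\<in>nodes T. c t \<in> tnodes N lev t) \<and>
     c T = out \<and>
     (\<forall>x. Leaf x \<in> nodes T \<longrightarrow>
        lab (c (Leaf x)) = One \<or> (lab (c (Leaf x)) = Pos x \<and> \<tau> x)
        \<or> (lab (c (Leaf x)) = Neg x \<and> \<not> \<tau> x)) \<and>
     (\<forall>t1 t2. Node t1 t2 \<in> nodes T \<longrightarrow> (c t1, c t2) \<in> E (c (Node t1 t2)))"

end

theory Submission
  imports Defs
begin

(* Disjointness is proved bottom-up: if two t-nodes share a model, then by induction
   their satisfied children coincide, so they share an edge, which determinism forbids;
   at the leaves the restrictions on labels do the job.  Hence, for a model of f_C,
   every N_t contains exactly one node satisfied by it (existence propagates down from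
   out along edges), and choosing that node at every t is a certificate.  Every
   certificate consists of satisfied nodes, so it is this one. *)

lemma nodes_self: "t \<in> nodes t"
  by (cases t) auto

lemma children_in_nodes:
  assumes "Node t1 t2 \<in> nodes T"
  shows "t1 \<in> nodes T" and "t2 \<in> nodes T"
  using assms by (induction T) (auto simp: nodes_self)

lemma nTDD_out_tnode:
  assumes "is_nTDD T N lev lab E out"
  shows "out \<in> tnodes N lev T"
  using assms unfolding is_nTDD_def tnodes_def by blast

lemma nTDD_leaf_label:
  assumes "is_nTDD T N lev lab E out" and "g \<in> tnodes N lev (Leaf x)"
  shows "lab g \<in> {Pos x, Neg x, One, Zero}"
  using assms unfolding is_nTDD_def tnodes_def by blast

lemma nTDD_edges_tnodes:
  assumes "is_nTDD T N lev lab E out" and "g \<in> tnodes N lev (Node t1 t2)"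
  shows "E g \<subseteq> tnodes N lev t1 \<times> tnodes N lev t2"
  using assms unfolding is_nTDD_def tnodes_def by blast

lemma TDD_imp_nTDD: "is_TDD T N lev lab E out \<Longrightarrow> is_nTDD T N lev lab E out"
  unfolding is_TDD_def by blast

lemma TDD_leaf_tnode_eqI:
  assumes tdd: "is_TDD T N lev lab E out" and x: "Leaf x \<in> nodes T"
    and g: "g \<in> tnodes N lev (Leaf x)" and g': "g' \<in> tnodes N lev (Leaf x)"
    and sat: "lab_sem (lab g) \<tau>" "lab_sem (lab g') \<tau>"
  shows "g = g'"
proof (rule ccontr)
  assume "g \<noteq> g'"
  have one: "lab h' = Zero" if "h \<in> tnodes N lev (Leaf x)" "h' \<in> tnodes N lev (Leaf x)"
      "h' \<noteq> h" "lab h = One" for h h'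
    using tdd x that unfolding is_TDD_def by blast
  have lit: "h = h'" if "h \<in> tnodes N lev (Leaf x)" "h' \<in> tnodes N lev (Leaf x)"
      "lab h = lab h'" "lab h \<in> {Pos x, Neg x}" for h h'
    using tdd x that unfolding is_TDD_def by (metis insertE singletonD)
  have "lab g \<noteq> One" "lab g' \<noteq> One"
    using one[OF g g'] one[OF g' g] \<open>g \<noteq> g'\<close> sat by auto
  moreover have "lab g \<in> {Pos x, Neg x, One, Zero}" "lab g' \<in> {Pos x, Neg x, One, Zero}"
    using nTDD_leaf_label[OF TDD_imp_nTDD[OF tdd]] g g' by blast+
  ultimately show False using lit[OF g g'] \<open>g \<noteq> g'\<close> sat by auto
qed

lemma TDD_edges_disjoint:
  assumes "is_TDD T N lev lab E out" and "Node t1 t2 \<in> nodes T"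
    and "g \<in> tnodes N lev (Node t1 t2)" "g' \<in> tnodes N lev (Node t1 t2)" "g \<noteq> g'"
  shows "E g \<inter> E g' = {}"
  using assms unfolding is_TDD_def by blast

lemma TDD_tnodes_models_disjoint:
  assumes tdd: "is_TDD T N lev lab E out"
  shows "t \<in> nodes T \<Longrightarrow> g \<in> tnodes N lev t \<Longrightarrow> g' \<in> tnodes N lev t \<Longrightarrow>
    sem lab E t g \<tau> \<Longrightarrow> sem lab E t g' \<tau> \<Longrightarrow> g = g'"
proof (induction t arbitrary: g g')
  case (Leaf x)
  then show ?case using TDD_leaf_tnode_eqI[OF tdd] by simp
next
  case (Node t1 t2)
  note ntdd = TDD_imp_nTDD[OF tdd]
  obtain g1 g2 where e: "(g1, g2) \<in> E g" "sem lab E t1 g1 \<tau>" "sem lab E t2 g2 \<tau>"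
    using Node.prems(4) by auto
  obtain h1 h2 where e': "(h1, h2) \<in> E g'" "sem lab E t1 h1 \<tau>" "sem lab E t2 h2 \<tau>"
    using Node.prems(5) by auto
  have "g1 = h1" "g2 = h2"
    using Node.IH children_in_nodes[OF Node.prems(1)] e e'
      nTDD_edges_tnodes[OF ntdd Node.prems(2)] nTDD_edges_tnodes[OF ntdd Node.prems(3)]
    by blast+
  then have "E g \<inter> E g' \<noteq> {}" using e(1) e'(1) by blast
  then show ?case using TDD_edges_disjoint[OF tdd Node.prems(1-3)] by blast
qed

lemma nTDD_model_descends:
  assumes ntdd: "is_nTDD T N lev lab E out"
  shows "s \<in> nodes t \<Longrightarrow> g \<in> tnodes N lev t \<Longrightarrow> sem lab E t g \<tau> \<Longrightarrow>
    \<exists>h\<in>tnodes N lev s. sem lab E s h \<tau>"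
proof (induction t arbitrary: g)
  case (Leaf x)
  then show ?case by auto
next
  case (Node t1 t2)
  obtain g1 g2 where e: "(g1, g2) \<in> E g" "sem lab E t1 g1 \<tau>" "sem lab E t2 g2 \<tau>"
    using Node.prems(3) by auto
  then have "g1 \<in> tnodes N lev t1" "g2 \<in> tnodes N lev t2"
    using nTDD_edges_tnodes[OF ntdd Node.prems(2)] by blast+
  moreover have "s = Node t1 t2 \<or> s \<in> nodes t1 \<or> s \<in> nodes t2"
    using Node.prems(1) by simp
  ultimately show ?case using Node e by blast
qed

(* Junk value unless N_t contains a unique node satisfied by \<tau>. *)
definition model_node ::
  "'g set \<Rightarrow> ('g \<Rightarrow> 'x vtree) \<Rightarrow> ('g \<Rightarrow> 'x lab) \<Rightarrow> ('g \<Rightarrow> ('g \<times> 'g) set) \<Rightarrow> ('x \<Rightarrow> bool)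
    \<Rightarrow> 'x vtree \<Rightarrow> 'g"
where
  "model_node N lev lab E \<tau> t = (THE g. g \<in> tnodes N lev t \<and> sem lab E t g \<tau>)"

lemma model_node_eqI:
  assumes "is_TDD T N lev lab E out" and "t \<in> nodes T"
    and "g \<in> tnodes N lev t" and "sem lab E t g \<tau>"
  shows "model_node N lev lab E \<tau> t = g"
  unfolding model_node_def
  using assms TDD_tnodes_models_disjoint[OF assms(1,2)] by (intro the_equality) blast+

lemma model_node_tnode_sem:
  assumes tdd: "is_TDD T N lev lab E out" and "sem lab E T out \<tau>" and "t \<in> nodes T"
  shows "model_node N lev lab E \<tau> t \<in> tnodes N lev t"
    and "sem lab E t (model_node N lev lab E \<tau> t) \<tau>"
proof -
  note ntdd = TDD_imp_nTDD[OF tdd]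
  obtain g where "g \<in> tnodes N lev t" "sem lab E t g \<tau>"
    using nTDD_model_descends[OF ntdd] nTDD_out_tnode[OF ntdd] assms(2,3) by blast
  with model_node_eqI[OF tdd \<open>t \<in> nodes T\<close>]
  show "model_node N lev lab E \<tau> t \<in> tnodes N lev t"
    and "sem lab E t (model_node N lev lab E \<tau> t) \<tau>"
    by simp_all
qed

lemma certificate_model_node:
  assumes tdd: "is_TDD T N lev lab E out" and sat: "sem lab E T out \<tau>"
  shows "is_certificate T N lev lab E out \<tau> (model_node N lev lab E \<tau>)"
  unfolding is_certificate_def
proof (intro conjI allI impI ballI)
  note ntdd = TDD_imp_nTDD[OF tdd]
  note c = model_node_tnode_sem[OF tdd sat]
  show "model_node N lev lab E \<tau> t \<in> tnodes N lev t" if "t \<in> nodes T" for t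
    using c that by blast
  show "model_node N lev lab E \<tau> T = out"
    using model_node_eqI[OF tdd nodes_self nTDD_out_tnode[OF ntdd] sat] .
  show "lab (model_node N lev lab E \<tau> (Leaf x)) = One
      \<or> lab (model_node N lev lab E \<tau> (Leaf x)) = Pos x \<and> \<tau> x
      \<or> lab (model_node N lev lab E \<tau> (Leaf x)) = Neg x \<and> \<not> \<tau> x"
    if "Leaf x \<in> nodes T" for x
    using c[OF that] nTDD_leaf_label[OF ntdd, of _ x] by fastforce
  fix t1 t2 assume t: "Node t1 t2 \<in> nodes T"
  obtain g1 g2 where e: "(g1, g2) \<in> E (model_node N lev lab E \<tau> (Node t1 t2))"
      "sem lab E t1 g1 \<tau>" "sem lab E t2 g2 \<tau>"
    using c(2)[OF t] by auto
  moreover have "g1 \<in> tnodes N lev t1" "g2 \<in> tnodes N lev t2"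
    using e(1) nTDD_edges_tnodes[OF ntdd c(1)[OF t]] by blast+
  ultimately show "(model_node N lev lab E \<tau> t1, model_node N lev lab E \<tau> t2)
      \<in> E (model_node N lev lab E \<tau> (Node t1 t2))"
    using model_node_eqI[OF tdd] children_in_nodes[OF t] by simp
qed

lemma certificate_sem:
  assumes "is_certificate T N lev lab E out \<tau> c"
  shows "t \<in> nodes T \<Longrightarrow> sem lab E t (c t) \<tau>"
proof (induction t)
  case (Leaf x)
  then show ?case using assms unfolding is_certificate_def by auto
next
  case (Node t1 t2)
  then show ?case
    using assms children_in_nodes[OF Node.prems] unfolding is_certificate_def by auto
qed

lemma certificate_eq_model_node:
  assumes "is_TDD T N lev lab E out" and "is_certificate T N lev lab E out \<tau> c"
    and "t \<in> nodes T"
  shows "c t = model_node N lev lab E \<tau> t"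
proof -
  have "c t \<in> tnodes N lev t" using assms(2,3) unfolding is_certificate_def by blast
  then show ?thesis using model_node_eqI[OF assms(1,3)] certificate_sem[OF assms(2,3)] by simp
qed

theorem theorem2:
  fixes T :: "'x vtree" and N :: "'g set" and lev :: "'g \<Rightarrow> 'x vtree"
    and lab :: "'g \<Rightarrow> 'x lab" and E :: "'g \<Rightarrow> ('g \<times> 'g) set" and out :: 'g
  assumes "is_TDD T N lev lab E out"
  shows "(\<forall>t\<in>nodes T. \<forall>g\<in>tnodes N lev t. \<forall>g'\<in>tnodes N lev t.
            g \<noteq> g' \<longrightarrow> \<not> (\<exists>\<tau>. sem lab E t g \<tau> \<and> sem lab E t g' \<tau>))
     \<and> (\<forall>\<tau>. sem lab E T out \<tau> \<longrightarrow>
          (\<exists>c. is_certificate T N lev lab E out \<tau> c \<and>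
             (\<forall>c'. is_certificate T N lev lab E out \<tau> c' \<longrightarrow> (\<forall>t\<in>nodes T. c' t = c t))))"
  using TDD_tnodes_models_disjoint[OF assms] certificate_model_node[OF assms]
    certificate_eq_model_node[OF assms]
  by blast

end
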